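(* Let $d\ge 1$ and let $\mathcal{G}\in\mathbb{R}^{N_1\times\cdots\times N_d\times T}$ be a real tensor of order $d+1$. For each $n\in\{1,\dots,d\}$ let $1\le r_n<N_n$, and let $\Phi_n\in\mathbb{R}^{N_n\times r_n}$ be the matrix whose columns are the $r_n$ leading left singular vectors of the mode-$n$ unfolding $G_{(n)}$, i.e. the left factor of a truncated rank-$r_n$ SVD $G_{(n)}\approx \Phi_n\Sigma_{r_n}^{(n)}(V_{r_n}^{(n)})^\top$. Let $S_n\in\mathbb{R}^{N_n\times r_n}$ be obtained from a column-pivoted QR factorization $\Phi_n^\top[P_1^{(n)}\ P_2^{(n)}]=Q_1^{(n)}[R_{11}^{(n)}\ R_{12}^{(n)}]$ (with $[P_1^{(n)}\ P_2^{(n)}]$ an $N_n\times N_n$ permutation matrix) by setting $S_n:=P_1^{(n)}$, the first $r_n$ columns of the permutation matrix, and assume that $S_n^\top\Phi_n$ is invertible for every $1\le n\le d$. Define the matrices $\Pi_n:=\Phi_n(S_n^\top\Phi_n)^{-1}S_n^\top\in\mathbb{R}^{N_n\times N_n}$. Then $$\bigl\|\mathcal{G}-\mathcal{G}\times_1\Pi_1\times_2\Pi_2\cdots\times_d\Pi_d\bigr\|_F\;\le\;\Bigl(\prod_{n=1}^d\bigl\|(S_n^\top\Phi_n)^{-1}\bigr\|_2\Bigr)\Bigl(\sum_{n=1}^d\sum_{k>r_n}\sigma_k^2\bigl(G_{(n)}\bigr)\Bigr)^{1/2},$$ where $\sigma_k(G_{(n)})$ denotes the $k$-th largest singular value of 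$G_{(n)}$.
   Context: For a tensor $\mathcal{G}$ of order $m$ with entries $g_{i_1,\dots,i_m}$, the mode-$n$ unfolding (matricization) $G_{(n)}$ is the matrix whose rows are indexed by $i_n$ and whose columns are indexed by all remaining indices $(i_j)_{j\neq n}$ (in a fixed ordering). The mode-$n$ product of $\mathcal{G}$ with a matrix $M\in\mathbb{R}^{R\times N_n}$ is the tensor $\mathcal{Y}=\mathcal{G}\times_n M$ with entries $y_{i_1,\dots,j,\dots,i_m}=\sum_{k}g_{i_1,\dots,k,\dots,i_m}m_{jk}$ ($j$ in position $n$), equivalently $Y_{(n)}=MG_{(n)}$; products in distinct modes commute. $\|\mathcal{G}\|_F^2=\sum g_{i_1,\dots,i_m}^2$ is the Frobenius norm and $\|\cdot\|_2$ is the spectral norm of a matrix. Note that only the first $d$ (spatial) modes are multiplied; mode $d+1$ (of size $T$) is left unchanged. *)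

theory Defs
  imports "HOL-Analysis.Analysis"
begin

text \<open>Modes are 0-indexed: the paper's spatial modes 1..d are modes 0..d-1 here,
and the temporal mode d+1 (of size T) is mode d. A tensor of order m with mode sizes
N 0, ..., N (m-1) is a function from multi-indices (nat => nat) to reals; only its values on
tidx N m matter. Matrices are functions nat => nat => real with explicitly given dimensions.\<close>

definition tidx :: "(nat \<Rightarrow> nat) \<Rightarrow> nat \<Rightarrow> (nat \<Rightarrow> nat) set" where
  "tidx N m = PiE {..<m} (\<lambda>k. {..<N k})"

definition frob :: "(nat \<Rightarrow> nat) \<Rightarrow> nat \<Rightarrow> ((nat \<Rightarrow> nat) \<Rightarrow> real) \<Rightarrow> real" where
  "frob N m G = sqrt (\<Sum>i\<in>tidx N m. (G i)\<^sup>2)"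

definition mode_prod :: "(nat \<Rightarrow> nat) \<Rightarrow> nat \<Rightarrow> (nat \<Rightarrow> nat \<Rightarrow> real)
    \<Rightarrow> ((nat \<Rightarrow> nat) \<Rightarrow> real) \<Rightarrow> ((nat \<Rightarrow> nat) \<Rightarrow> real)" where
  "mode_prod N n M G = (\<lambda>i. \<Sum>k<N n. G (i(n := k)) * M (i n) k)"

primrec multi_mode_prod :: "(nat \<Rightarrow> nat) \<Rightarrow> (nat \<Rightarrow> nat \<Rightarrow> nat \<Rightarrow> real) \<Rightarrow> nat
    \<Rightarrow> ((nat \<Rightarrow> nat) \<Rightarrow> real) \<Rightarrow> ((nat \<Rightarrow> nat) \<Rightarrow> real)" where
  "multi_mode_prod N M 0 G = G"
| "multi_mode_prod N M (Suc n) G = mode_prod N n (M n) (multi_mode_prod N M n G)"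

text \<open>Mode-n mode_unfold of an order-m tensor: rows indexed by i_n < N n, columns indexed
by the tuples of all remaining indices (the set unfold_cols N m n).\<close>
definition unfold_cols :: "(nat \<Rightarrow> nat) \<Rightarrow> nat \<Rightarrow> nat \<Rightarrow> (nat \<Rightarrow> nat) set" where
  "unfold_cols N m n = PiE ({..<m} - {n}) (\<lambda>k. {..<N k})"

definition mode_unfold :: "((nat \<Rightarrow> nat) \<Rightarrow> real) \<Rightarrow> nat \<Rightarrow> nat \<Rightarrow> (nat \<Rightarrow> nat) \<Rightarrow> real" where
  "mode_unfold G n = (\<lambda>a j. G (j(n := a)))"

definition is_svd :: "nat \<Rightarrow> 'j set \<Rightarrow> (nat \<Rightarrow> 'j \<Rightarrow> real) \<Rightarrow> (nat \<Rightarrow> nat \<Rightarrow> real)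
    \<Rightarrow> (nat \<Rightarrow> real) \<Rightarrow> bool" where
  "is_svd Nr J A U s \<longleftrightarrow>
     (\<forall>i<Nr. \<forall>i'<Nr. (\<Sum>k<Nr. U i k * U i' k) = (if i = i' then 1 else 0)) \<and>
     (\<forall>k<Nr. \<forall>k'<Nr. (\<Sum>i<Nr. U i k * U i k') = (if k = k' then 1 else 0)) \<and>
     (\<forall>k<Nr. 0 \<le> s k) \<and> (\<forall>k l. k \<le> l \<longrightarrow> l < Nr \<longrightarrow> s l \<le> s k) \<and>
     (\<exists>V :: nat \<Rightarrow> 'j \<Rightarrow> real.
        (\<forall>k<Nr. \<forall>l<Nr. 0 < s k \<longrightarrow> 0 < s l \<longrightarrow>
            (\<Sum>j\<in>J. V k j * V l j) = (if k = l then 1 else 0)) \<and>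
        (\<forall>i<Nr. \<forall>j\<in>J. A i j = (\<Sum>k<Nr. U i k * s k * V k j)))"

definition spec_norm :: "nat \<Rightarrow> nat \<Rightarrow> (nat \<Rightarrow> nat \<Rightarrow> real) \<Rightarrow> real" where
  "spec_norm m n A = Sup {sqrt (\<Sum>i<m. (\<Sum>j<n. A i j * x j)\<^sup>2) | x. (\<Sum>j<n. (x j)\<^sup>2) \<le> 1}"

text \<open>Oblique projection Pi = Phi (S^T Phi)^{-1} S^T, given Minv = (S^T Phi)^{-1} (r x r).\<close>
definition oblique_proj :: "nat \<Rightarrow> (nat \<Rightarrow> nat \<Rightarrow> real) \<Rightarrow> (nat \<Rightarrow> nat \<Rightarrow> real)
    \<Rightarrow> (nat \<Rightarrow> nat \<Rightarrow> real) \<Rightarrow> nat \<Rightarrow> nat \<Rightarrow> real" where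
  "oblique_proj r Phi Minv S = (\<lambda>a b. \<Sum>k<r. \<Sum>l<r. Phi a k * Minv k l * S b l)"

end

theory Submission
  imports Defs
begin

text \<open>Write P_n = Phi_n Phi_n^T for the orthogonal projections, L and Q for the maps
  X |-> X x_1 Pi_1 ... x_d Pi_d and X |-> X x_1 P_1 ... x_d P_d, and Y = G - Q G. Since Pi_n P_n = P_n and
  P_n Pi_n = Pi_n, L fixes the range of Q and maps into it; hence G - L G = Y - L Y with Y
  orthogonal to L Y. For an idempotent L this gives |Y - L Y| <= |L| |Y|, and
  |L| <= prod_n |(S_n^T Phi_n)^-1|_2 because Phi_n has orthonormal columns and S_n^T only
  selects entries. Finally Y splits into orthogonal pieces bounded by the single-mode residuals
  |G - G x_n P_n|, whose squares are the tails of the squared singular values of G_(n) by the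
  SVD.\<close>

section \<open>Inner product and mode products of tensors\<close>

lemma tidx_fun_upd: "i \<in> tidx N m \<Longrightarrow> n < m \<Longrightarrow> k < N n \<Longrightarrow> i(n := k) \<in> tidx N m"
  unfolding tidx_def by (auto simp: PiE_iff extensional_def)

lemma tidx_less: "i \<in> tidx N m \<Longrightarrow> n < m \<Longrightarrow> i n < N n"
  unfolding tidx_def by (auto simp: PiE_iff)

lemma sum_tidx_fun_upd_swap:
  assumes "n < m"
  shows "(\<Sum>i\<in>tidx N m. \<Sum>k<N n. F (i(n := k)) (i n) k) = (\<Sum>i\<in>tidx N m. \<Sum>k<N n. F i k (i n))"
proof -
  have "(\<Sum>i\<in>tidx N m. \<Sum>k<N n. F (i(n := k)) (i n) k)
      = (\<Sum>(i, k)\<in>tidx N m \<times> {..<N n}. F (i(n := k)) (i n) k)"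
    by (simp add: sum.cartesian_product)
  also have "\<dots> = (\<Sum>(i, k)\<in>tidx N m \<times> {..<N n}. F i k (i n))"
    by (rule sum.reindex_bij_witness[where i="\<lambda>(i, k). (i(n := k), i n)" and j="\<lambda>(i, k). (i(n := k), i n)"])
       (auto simp: assms tidx_fun_upd tidx_less)
  finally show ?thesis
    by (simp add: sum.cartesian_product)
qed

lemma tidx_eq_empty: "n < m \<Longrightarrow> N n = 0 \<Longrightarrow> tidx N m = {}"
  using tidx_less by fastforce

lemma unfold_cols_fun_upd:
  "j \<in> unfold_cols N m n \<Longrightarrow> a < N n \<Longrightarrow> n < m \<Longrightarrow> j(n := a) \<in> tidx N m"
  unfolding unfold_cols_def tidx_def by (auto simp: PiE_iff extensional_def)

lemma sum_tidx_unfold: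
  assumes "n < m"
  shows "(\<Sum>i\<in>tidx N m. f i) = (\<Sum>a<N n. \<Sum>j\<in>unfold_cols N m n. f (j(n := a)))"
proof -
  have "(\<Sum>a<N n. \<Sum>j\<in>unfold_cols N m n. f (j(n := a)))
      = (\<Sum>(a, j)\<in>{..<N n} \<times> unfold_cols N m n. f (j(n := a)))"
    by (simp add: sum.cartesian_product)
  also have "\<dots> = (\<Sum>i\<in>tidx N m. f i)"
    by (rule sum.reindex_bij_witness[where i="\<lambda>i. (i n, i(n := undefined))" and j="\<lambda>(a, j). j(n := a)"])
       (use assms in \<open>auto simp: tidx_less unfold_cols_fun_upd\<close>,
        auto simp: tidx_def unfold_cols_def PiE_iff extensional_def)
  finally show ?thesis ..
qed

definition tensor_inner :: "(nat \<Rightarrow> nat) \<Rightarrow> nat \<Rightarrow> ((nat \<Rightarrow> nat) \<Rightarrow> real)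
    \<Rightarrow> ((nat \<Rightarrow> nat) \<Rightarrow> real) \<Rightarrow> real" where
  "tensor_inner N m X Y = (\<Sum>i\<in>tidx N m. X i * Y i)"

lemma frob_eq_sqrt_tensor_inner: "frob N m X = sqrt (tensor_inner N m X X)"
  by (simp add: frob_def tensor_inner_def power2_eq_square)

lemma tensor_inner_commute: "tensor_inner N m X Y = tensor_inner N m Y X"
  by (simp add: tensor_inner_def mult.commute)

lemma tensor_inner_scale_left: "tensor_inner N m (\<lambda>i. c * X i) Y = c * tensor_inner N m X Y"
  by (simp add: tensor_inner_def sum_distrib_left mult.assoc)

lemma tensor_inner_cong:
  "\<forall>i\<in>tidx N m. X i = X' i \<Longrightarrow> \<forall>i\<in>tidx N m. Y i = Y' i
    \<Longrightarrow> tensor_inner N m X Y = tensor_inner N m X' Y'"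
  by (simp add: tensor_inner_def)

lemma tensor_inner_self_nonneg: "0 \<le> tensor_inner N m X X"
  by (simp add: tensor_inner_def sum_nonneg)

lemma tensor_inner_scale_self:
  "tensor_inner N m (\<lambda>i. c * X i) (\<lambda>i. c * X i) = c\<^sup>2 * tensor_inner N m X X"
  by (simp add: tensor_inner_def sum_distrib_left mult_ac power2_eq_square)

lemma tensor_inner_add_self:
  "tensor_inner N m (\<lambda>i. X i + Y i) (\<lambda>i. X i + Y i)
     = tensor_inner N m X X + 2 * tensor_inner N m X Y + tensor_inner N m Y Y"
  by (simp add: tensor_inner_def sum.distrib sum_distrib_left algebra_simps)

lemma tensor_inner_diff_self:
  "tensor_inner N m (\<lambda>i. X i - Y i) (\<lambda>i. X i - Y i)
     = tensor_inner N m X X - 2 * tensor_inner N m X Y + tensor_inner N m Y Y"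
  by (simp add: tensor_inner_def sum_subtractf sum.distrib sum_distrib_left algebra_simps)

lemma mode_prod_linear:
  "mode_prod N n M (\<lambda>i. a * X i + b * Y i) = (\<lambda>i. a * mode_prod N n M X i + b * mode_prod N n M Y i)"
  by (simp add: mode_prod_def sum.distrib sum_distrib_left algebra_simps)

lemma mode_prod_mode_prod:
  "mode_prod N n A (mode_prod N n B X) = mode_prod N n (\<lambda>a c. \<Sum>b<N n. A a b * B b c) X"
  by (auto simp: mode_prod_def sum_distrib_left sum_distrib_right mult_ac intro!: ext sum.swap[THEN trans])

lemma mode_prod_commute:
  "n \<noteq> n' \<Longrightarrow> mode_prod N n A (mode_prod N n' B X) = mode_prod N n' B (mode_prod N n A X)"
  by (auto simp: mode_prod_def sum_distrib_left sum_distrib_right mult_ac fun_upd_twist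
      intro!: ext sum.swap[THEN trans])

lemma tensor_inner_mode_prod_adjoint:
  assumes "n < m"
  shows "tensor_inner N m (mode_prod N n M X) Y = tensor_inner N m X (mode_prod N n (\<lambda>a b. M b a) Y)"
proof -
  have "tensor_inner N m (mode_prod N n M X) Y
      = (\<Sum>i\<in>tidx N m. \<Sum>k<N n. (\<lambda>x a b. X x * Y (x(n := a)) * M a b) (i(n := k)) (i n) k)"
    by (simp add: tensor_inner_def mode_prod_def sum_distrib_left sum_distrib_right mult_ac)
  also have "\<dots> = (\<Sum>i\<in>tidx N m. \<Sum>k<N n. (\<lambda>x a b. X x * Y (x(n := a)) * M a b) i k (i n))"
    by (rule sum_tidx_fun_upd_swap[OF assms])
  also have "\<dots> = tensor_inner N m X (mode_prod N n (\<lambda>a b. M b a) Y)"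
    by (simp add: tensor_inner_def mode_prod_def sum_distrib_left mult_ac)
  finally show ?thesis .
qed

lemma mode_prod_norm_le:
  assumes "n < m" and "0 \<le> c"
    and bound: "\<And>x. (\<Sum>a<N n. (\<Sum>k<N n. M a k * x k)\<^sup>2) \<le> c * (\<Sum>k<N n. (x k)\<^sup>2)"
  shows "tensor_inner N m (mode_prod N n M X) (mode_prod N n M X) \<le> c * tensor_inner N m X X"
proof (cases "N n = 0")
  case True
  then show ?thesis
    using tidx_eq_empty[OF assms(1)] by (simp add: tensor_inner_def)
next
  case False
  have fibres: "(\<Sum>i\<in>tidx N m. \<Sum>k<N n. g (i(n := k))) = real (N n) * (\<Sum>i\<in>tidx N m. g i)"
    for g :: "(nat \<Rightarrow> nat) \<Rightarrow> real"
    using sum_tidx_fun_upd_swap[OF assms(1), where F="\<lambda>x a b. g x" and N=N]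
    by (simp add: sum_distrib_left)
  define f where "f i = (mode_prod N n M X i)\<^sup>2" for i
  have "real (N n) * tensor_inner N m (mode_prod N n M X) (mode_prod N n M X)
      = (\<Sum>i\<in>tidx N m. \<Sum>k<N n. f (i(n := k)))"
    by (subst fibres) (simp add: f_def tensor_inner_def power2_eq_square)
  also have "\<dots> = (\<Sum>i\<in>tidx N m. \<Sum>a<N n. (\<Sum>k<N n. M a k * X (i(n := k)))\<^sup>2)"
    by (simp add: f_def mode_prod_def mult.commute)
  also have "\<dots> \<le> (\<Sum>i\<in>tidx N m. c * (\<Sum>k<N n. (X (i(n := k)))\<^sup>2))"
    by (rule sum_mono) (rule bound)
  also have "\<dots> = real (N n) * (c * tensor_inner N m X X)"
    by (subst sum_distrib_left[symmetric], subst fibres) (simp add: tensor_inner_def power2_eq_square)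
  finally show ?thesis
    using False by simp
qed

lemma mode_prod_multi_mode_prod_commute:
  "d \<le> n \<Longrightarrow> mode_prod N n A (multi_mode_prod N M d X) = multi_mode_prod N M d (mode_prod N n A X)"
  by (induction d) (simp_all add: mode_prod_commute)

lemma multi_mode_prod_linear:
  "multi_mode_prod N A k (\<lambda>i. a * X i + b * Y i)
     = (\<lambda>i. a * multi_mode_prod N A k X i + b * multi_mode_prod N A k Y i)"
  by (induction k) (simp_all add: mode_prod_linear)

lemma multi_mode_prod_multi_mode_prod:
  "multi_mode_prod N A d (multi_mode_prod N B d X)
     = multi_mode_prod N (\<lambda>n a c. \<Sum>b<N n. A n a b * B n b c) d X"
proof (induction d)
  case 0
  then show ?case by simp
next
  case (Suc d)
  have "multi_mode_prod N A (Suc d) (multi_mode_prod N B (Suc d) X)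
      = mode_prod N d (A d) (mode_prod N d (B d) (multi_mode_prod N A d (multi_mode_prod N B d X)))"
    by (simp add: mode_prod_multi_mode_prod_commute)
  then show ?case
    by (simp add: mode_prod_mode_prod Suc.IH)
qed

lemma multi_mode_prod_cong:
  assumes "d \<le> m" "\<forall>i\<in>tidx N m. X i = X' i" "\<forall>n<d. \<forall>a<N n. \<forall>b<N n. A n a b = A' n a b"
  shows "\<forall>i\<in>tidx N m. multi_mode_prod N A d X i = multi_mode_prod N A' d X' i"
  using assms
proof (induction d)
  case 0
  then show ?case by simp
next
  case (Suc d)
  then have "\<forall>i\<in>tidx N m. multi_mode_prod N A d X i = multi_mode_prod N A' d X' i"
    by auto
  with Suc.prems show ?case
    by (auto simp: mode_prod_def tidx_fun_upd tidx_less intro!: sum.cong)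
qed

lemma multi_mode_prod_multi_mode_prod_on_tidx:
  assumes "d \<le> m" and "\<forall>n<d. \<forall>a<N n. \<forall>c<N n. (\<Sum>b<N n. A n a b * B n b c) = C n a c"
  shows "\<forall>i\<in>tidx N m. multi_mode_prod N A d (multi_mode_prod N B d X) i = multi_mode_prod N C d X i"
  unfolding multi_mode_prod_multi_mode_prod using assms by (intro multi_mode_prod_cong) auto

lemma tensor_inner_multi_mode_prod_adjoint:
  assumes "d \<le> m"
  shows "tensor_inner N m (multi_mode_prod N A d X) Y
       = tensor_inner N m X (multi_mode_prod N (\<lambda>n a b. A n b a) d Y)"
  using assms
proof (induction d arbitrary: Y)
  case 0
  then show ?case by simp
next
  case (Suc d)
  have "tensor_inner N m (multi_mode_prod N A (Suc d) X) Y
      = tensor_inner N m (multi_mode_prod N A d X) (mode_prod N d (\<lambda>a b. A d b a) Y)"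
    using Suc.prems by (simp add: tensor_inner_mode_prod_adjoint)
  also have "\<dots> = tensor_inner N m X (multi_mode_prod N (\<lambda>n a b. A n b a) (Suc d) Y)"
    using Suc by (simp add: mode_prod_multi_mode_prod_commute)
  finally show ?case .
qed

lemma multi_mode_prod_norm_le:
  assumes "d \<le> m" "\<forall>n<d. 0 \<le> c n"
    and bound: "\<And>n x. n < d \<Longrightarrow>
                  (\<Sum>a<N n. (\<Sum>k<N n. A n a k * x k)\<^sup>2) \<le> c n * (\<Sum>k<N n. (x k)\<^sup>2)"
  shows "tensor_inner N m (multi_mode_prod N A d X) (multi_mode_prod N A d X)
       \<le> (\<Prod>n<d. c n) * tensor_inner N m X X"
  using assms
proof (induction d)
  case 0
  then show ?case by simp
next
  case (Suc d)
  have "tensor_inner N m (multi_mode_prod N A (Suc d) X) (multi_mode_prod N A (Suc d) X)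
      \<le> c d * tensor_inner N m (multi_mode_prod N A d X) (multi_mode_prod N A d X)"
    using Suc.prems by (simp add: mode_prod_norm_le)
  also have "\<dots> \<le> c d * ((\<Prod>n<d. c n) * tensor_inner N m X X)"
    using Suc by (simp add: mult_left_mono)
  finally show ?case
    by (simp add: mult_ac)
qed

section \<open>Products of orthogonal projections\<close>

definition is_orth_proj_mat :: "nat \<Rightarrow> (nat \<Rightarrow> nat \<Rightarrow> real) \<Rightarrow> bool" where
  "is_orth_proj_mat n P \<longleftrightarrow>
     (\<forall>a<n. \<forall>b<n. P a b = P b a) \<and> (\<forall>a<n. \<forall>c<n. (\<Sum>b<n. P a b * P b c) = P a c)"

context
  fixes N :: "nat \<Rightarrow> nat" and P :: "nat \<Rightarrow> nat \<Rightarrow> nat \<Rightarrow> real" and k m :: nat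
  assumes k_le: "k \<le> m" and orth_proj: "\<forall>n<k. is_orth_proj_mat (N n) (P n)"
begin

lemma multi_orth_proj_idem:
  "\<forall>i\<in>tidx N m. multi_mode_prod N P k (multi_mode_prod N P k X) i = multi_mode_prod N P k X i"
  using orth_proj unfolding is_orth_proj_mat_def by (intro multi_mode_prod_multi_mode_prod_on_tidx[OF k_le]) blast

lemma multi_orth_proj_self_adjoint:
  "tensor_inner N m (multi_mode_prod N P k X) Y = tensor_inner N m X (multi_mode_prod N P k Y)"
proof -
  have "\<forall>i\<in>tidx N m. multi_mode_prod N (\<lambda>n a b. P n b a) k Y i = multi_mode_prod N P k Y i"
    using orth_proj by (intro multi_mode_prod_cong[OF k_le]) (auto simp: is_orth_proj_mat_def)
  then show ?thesis
    unfolding tensor_inner_multi_mode_prod_adjoint[OF k_le] by (intro tensor_inner_cong) simp_all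
qed

lemma multi_orth_proj_residual_orth:
  "tensor_inner N m (\<lambda>i. X i - multi_mode_prod N P k X i) (multi_mode_prod N P k Z) = 0"
proof -
  have "tensor_inner N m (\<lambda>i. X i - multi_mode_prod N P k X i) (multi_mode_prod N P k Z)
      = tensor_inner N m (multi_mode_prod N P k (\<lambda>i. 1 * X i + (-1) * multi_mode_prod N P k X i)) Z"
    by (simp add: multi_orth_proj_self_adjoint)
  also have "\<dots> = tensor_inner N m (\<lambda>i. 1 * multi_mode_prod N P k X i
                              + (-1) * multi_mode_prod N P k (multi_mode_prod N P k X) i) Z"
    by (simp only: multi_mode_prod_linear)
  also have "\<dots> = 0"
    using multi_orth_proj_idem by (simp add: tensor_inner_def)
  finally show ?thesis .
qed

lemma multi_orth_proj_norm_le: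
  "tensor_inner N m (multi_mode_prod N P k Z) (multi_mode_prod N P k Z) \<le> tensor_inner N m Z Z"
proof -
  let ?Q = "multi_mode_prod N P k Z"
  have "tensor_inner N m Z Z = tensor_inner N m (\<lambda>i. ?Q i + (Z i - ?Q i)) (\<lambda>i. ?Q i + (Z i - ?Q i))"
    by simp
  also have "\<dots> = tensor_inner N m ?Q ?Q + tensor_inner N m (\<lambda>i. Z i - ?Q i) (\<lambda>i. Z i - ?Q i)"
    using multi_orth_proj_residual_orth[of Z Z] tensor_inner_commute[of N m ?Q "\<lambda>i. Z i - ?Q i"]
    by (subst tensor_inner_add_self) simp
  finally show ?thesis
    using tensor_inner_self_nonneg[of N m "\<lambda>i. Z i - ?Q i"] by linarith
qed

end

text \<open>The residual of a product of orthogonal projections in distinct modes splits into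
  orthogonal pieces, one per mode, each no larger than the residual of that mode alone.\<close>

lemma multi_orth_proj_residual_le_sum:
  assumes "k \<le> m" and "\<forall>n<k. is_orth_proj_mat (N n) (P n)"
  shows "tensor_inner N m (\<lambda>i. G i - multi_mode_prod N P k G i) (\<lambda>i. G i - multi_mode_prod N P k G i)
       \<le> (\<Sum>n<k. tensor_inner N m (\<lambda>i. G i - mode_prod N n (P n) G i) (\<lambda>i. G i - mode_prod N n (P n) G i))"
  using assms
proof (induction k)
  case 0
  then show ?case by (simp add: tensor_inner_def)
next
  case (Suc k)
  let ?Qk = "multi_mode_prod N P k"
  define W where "W = (\<lambda>i. G i - ?Qk G i)"
  define Z where "Z = (\<lambda>i. G i - mode_prod N k (P k) G i)"
  have orth_k: "\<forall>n<k. is_orth_proj_mat (N n) (P n)" and "k \<le> m"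
    using Suc.prems by auto
  have "?Qk Z = (\<lambda>i. 1 * ?Qk G i + (-1) * ?Qk (mode_prod N k (P k) G) i)"
    unfolding multi_mode_prod_linear[symmetric] by (simp add: Z_def)
  then have split: "(\<lambda>i. G i - multi_mode_prod N P (Suc k) G i) = (\<lambda>i. W i + ?Qk Z i)"
    by (auto simp: W_def mode_prod_multi_mode_prod_commute)
  have "tensor_inner N m (\<lambda>i. G i - multi_mode_prod N P (Suc k) G i) (\<lambda>i. G i - multi_mode_prod N P (Suc k) G i)
      = tensor_inner N m W W + tensor_inner N m (?Qk Z) (?Qk Z)"
    unfolding split tensor_inner_add_self W_def
    using multi_orth_proj_residual_orth[OF \<open>k \<le> m\<close> orth_k] by simp
  also have "\<dots> \<le> tensor_inner N m W W + tensor_inner N m Z Z"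
    using multi_orth_proj_norm_le[OF \<open>k \<le> m\<close> orth_k] by simp
  also have "\<dots> \<le> (\<Sum>n<Suc k. tensor_inner N m (\<lambda>i. G i - mode_prod N n (P n) G i)
                                         (\<lambda>i. G i - mode_prod N n (P n) G i))"
    using Suc.IH[OF \<open>k \<le> m\<close> orth_k] by (simp add: W_def Z_def)
  finally show ?case .
qed

section \<open>Idempotent mode products\<close>

lemma quadratic_test_le:
  fixes a b K :: real
  assumes test: "\<And>c. (c + 1)\<^sup>2 * b \<le> K * (c\<^sup>2 * b + a)" and "0 \<le> a" "0 \<le> b" "1 \<le> K"
  shows "a + b \<le> K * a"
proof (cases "b = 0")
  case True
  then show ?thesis
    using assms(2,4) by (simp add: mult_le_cancel_right1)
next
  case False
  then have "0 < b" using \<open>0 \<le> b\<close> by simp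
  have "(a + b)\<^sup>2 / b = (a / b + 1)\<^sup>2 * b" and "a * (a + b) / b = (a / b)\<^sup>2 * b + a"
    using \<open>0 < b\<close> by (simp_all add: field_simps power2_eq_square)
  then have "(a + b)\<^sup>2 / b \<le> K * (a * (a + b) / b)"
    using test[of "a / b"] by simp
  then have "(a + b) * (a + b) \<le> (K * a) * (a + b)"
    using \<open>0 < b\<close> by (simp add: divide_le_eq power2_eq_square mult_ac)
  then show ?thesis
    using \<open>0 < b\<close> \<open>0 \<le> a\<close> by (simp add: mult_le_cancel_right)
qed

text \<open>The bound on A is tested at Y + c AY, which the idempotent A maps to (1 + c) AY;
  the best choice c = |Y|^2 / |AY|^2 yields the bound on I - A.\<close>

lemma multi_mode_prod_idem_residual_le:
  assumes "k \<le> m"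
    and idem: "\<forall>n<k. \<forall>a<N n. \<forall>c<N n. (\<Sum>b<N n. A n a b * A n b c) = A n a c"
    and bound: "\<And>X. tensor_inner N m (multi_mode_prod N A k X) (multi_mode_prod N A k X)
                     \<le> K * tensor_inner N m X X"
    and "1 \<le> K"
    and orth: "tensor_inner N m Y (multi_mode_prod N A k Y) = 0"
  shows "tensor_inner N m (\<lambda>i. Y i - multi_mode_prod N A k Y i) (\<lambda>i. Y i - multi_mode_prod N A k Y i)
       \<le> K * tensor_inner N m Y Y"
proof -
  let ?v = "multi_mode_prod N A k Y"
  have test: "(c + 1)\<^sup>2 * tensor_inner N m ?v ?v
      \<le> K * (c\<^sup>2 * tensor_inner N m ?v ?v + tensor_inner N m Y Y)" for c
  proof -
    let ?x = "\<lambda>i. c * ?v i + 1 * Y i"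
    have "\<forall>i\<in>tidx N m. multi_mode_prod N A k ?x i = (c + 1) * ?v i"
      unfolding multi_mode_prod_linear using multi_mode_prod_multi_mode_prod_on_tidx[OF assms(1,2)] by (simp add: algebra_simps)
    then have "tensor_inner N m (multi_mode_prod N A k ?x) (multi_mode_prod N A k ?x)
        = tensor_inner N m (\<lambda>i. (c + 1) * ?v i) (\<lambda>i. (c + 1) * ?v i)"
      by (intro tensor_inner_cong)
    then have "tensor_inner N m (multi_mode_prod N A k ?x) (multi_mode_prod N A k ?x)
        = (c + 1)\<^sup>2 * tensor_inner N m ?v ?v"
      by (simp only: tensor_inner_scale_self)
    moreover have "tensor_inner N m ?x ?x = c\<^sup>2 * tensor_inner N m ?v ?v + tensor_inner N m Y Y"
      using tensor_inner_add_self[of N m "\<lambda>i. c * ?v i" Y] orth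
      by (simp add: tensor_inner_scale_self tensor_inner_scale_left
          tensor_inner_commute[of N m ?v Y])
    ultimately show ?thesis
      using bound[of ?x] by simp
  qed
  have "tensor_inner N m (\<lambda>i. Y i - ?v i) (\<lambda>i. Y i - ?v i) = tensor_inner N m Y Y + tensor_inner N m ?v ?v"
    using orth by (simp add: tensor_inner_diff_self)
  also have "\<dots> \<le> K * tensor_inner N m Y Y"
    by (rule quadratic_test_le[OF test tensor_inner_self_nonneg tensor_inner_self_nonneg \<open>1 \<le> K\<close>])
  finally show ?thesis .
qed

section \<open>Spectral norm, orthogonal and oblique projection matrices\<close>

lemma bdd_above_spec_norm_set:
  fixes A :: "nat \<Rightarrow> nat \<Rightarrow> real"
  shows "bdd_above {sqrt (\<Sum>i<m. (\<Sum>j<n. A i j * x j)\<^sup>2) | x. (\<Sum>j<n. (x j)\<^sup>2) \<le> 1}"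
proof (rule bdd_aboveI, clarify)
  fix x :: "nat \<Rightarrow> real"
  assume x: "(\<Sum>j<n. (x j)\<^sup>2) \<le> 1"
  have "(\<Sum>j<n. A i j * x j)\<^sup>2 \<le> (\<Sum>j<n. (A i j)\<^sup>2)" for i
  proof -
    have "(\<Sum>j<n. A i j * x j)\<^sup>2 \<le> (\<Sum>j<n. (A i j)\<^sup>2) * (\<Sum>j<n. (x j)\<^sup>2)"
      by (rule Cauchy_Schwarz_ineq_sum)
    also have "\<dots> \<le> (\<Sum>j<n. (A i j)\<^sup>2)"
      using mult_left_mono[OF x, of "\<Sum>j<n. (A i j)\<^sup>2"] by (simp add: sum_nonneg)
    finally show ?thesis .
  qed
  then show "sqrt (\<Sum>i<m. (\<Sum>j<n. A i j * x j)\<^sup>2) \<le> sqrt (\<Sum>i<m. \<Sum>j<n. (A i j)\<^sup>2)"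
    by (simp add: sum_mono)
qed

lemma spec_norm_upper:
  "(\<Sum>j<n. (x j)\<^sup>2) \<le> 1 \<Longrightarrow> sqrt (\<Sum>i<m. (\<Sum>j<n. A i j * x j)\<^sup>2) \<le> spec_norm m n A"
  unfolding spec_norm_def by (rule cSup_upper[OF _ bdd_above_spec_norm_set]) blast

lemma spec_norm_nonneg: "0 \<le> spec_norm m n A"
  using spec_norm_upper[where x="\<lambda>_. 0" and m=m and A=A] by simp

lemma sum_sq_matrix_mult_le_spec_norm:
  "(\<Sum>i<m. (\<Sum>j<n. A i j * x j)\<^sup>2) \<le> (spec_norm m n A)\<^sup>2 * (\<Sum>j<n. (x j)\<^sup>2)"
proof (cases "(\<Sum>j<n. (x j)\<^sup>2) = 0")
  case True
  then have "\<forall>j<n. x j = 0"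
    by (simp add: sum_nonneg_eq_0_iff)
  then show ?thesis
    by (simp add: True)
next
  case False
  define t where "t = sqrt (\<Sum>j<n. (x j)\<^sup>2)"
  have "0 < t"
    using False by (simp add: t_def order_neq_le_trans[OF _ sum_nonneg])
  have "(\<Sum>j<n. (x j / t)\<^sup>2) = 1"
    using \<open>0 < t\<close> False by (simp add: t_def power_divide sum_divide_distrib[symmetric] sum_nonneg)
  then have "sqrt (\<Sum>i<m. (\<Sum>j<n. A i j * (x j / t))\<^sup>2) \<le> spec_norm m n A"
    by (intro spec_norm_upper) simp
  moreover have "(\<Sum>i<m. (\<Sum>j<n. A i j * (x j / t))\<^sup>2) = (\<Sum>i<m. (\<Sum>j<n. A i j * x j)\<^sup>2) / t\<^sup>2"
    by (simp add: sum_divide_distrib[symmetric] power_divide)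
  ultimately have "sqrt (\<Sum>i<m. (\<Sum>j<n. A i j * x j)\<^sup>2) \<le> spec_norm m n A * t"
    using \<open>0 < t\<close> by (simp add: real_sqrt_divide divide_le_eq)
  then have "(\<Sum>i<m. (\<Sum>j<n. A i j * x j)\<^sup>2) \<le> (spec_norm m n A * t)\<^sup>2"
    by (rule sqrt_le_D)
  then show ?thesis
    by (simp add: t_def power_mult_distrib sum_nonneg)
qed

lemma sum_mult_assoc:
  fixes X :: "'k \<Rightarrow> 'a::comm_semiring_1"
  shows "(\<Sum>b\<in>B. (\<Sum>k\<in>K. X k * Y k b) * Z b) = (\<Sum>k\<in>K. X k * (\<Sum>b\<in>B. Y k b * Z b))"
  by (simp add: sum_distrib_left sum_distrib_right mult.assoc) (rule sum.swap)

definition orthonormal_cols :: "nat \<Rightarrow> nat \<Rightarrow> (nat \<Rightarrow> nat \<Rightarrow> real) \<Rightarrow> bool" where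
  "orthonormal_cols n r F \<longleftrightarrow> (\<forall>k<r. \<forall>k'<r. (\<Sum>a<n. F a k * F a k') = (if k = k' then 1 else 0))"

lemma orthonormal_cols_sum_sq:
  assumes "orthonormal_cols n r F" and "K \<subseteq> {..<r}"
  shows "(\<Sum>a<n. (\<Sum>k\<in>K. F a k * z k)\<^sup>2) = (\<Sum>k\<in>K. (z k)\<^sup>2)"
proof -
  have "(\<Sum>a<n. (\<Sum>k\<in>K. F a k * z k)\<^sup>2) = (\<Sum>a<n. \<Sum>k\<in>K. \<Sum>k'\<in>K. z k * z k' * (F a k * F a k'))"
    by (simp add: power2_eq_square sum_product mult_ac)
  also have "\<dots> = (\<Sum>k\<in>K. \<Sum>a<n. \<Sum>k'\<in>K. z k * z k' * (F a k * F a k'))"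
    by (rule sum.swap)
  also have "\<dots> = (\<Sum>k\<in>K. \<Sum>k'\<in>K. z k * z k' * (\<Sum>a<n. F a k * F a k'))"
    by (simp add: sum_distrib_left sum.swap[of _ "{..<n}"])
  also have "\<dots> = (\<Sum>k\<in>K. \<Sum>k'\<in>K. if k = k' then z k * z k' else 0)"
    using assms by (intro sum.cong refl) (auto simp: orthonormal_cols_def subset_iff)
  also have "\<dots> = (\<Sum>k\<in>K. (z k)\<^sup>2)"
    using finite_subset[OF assms(2)] by (simp add: power2_eq_square)
  finally show ?thesis .
qed

lemma left_mult_fixes_span:
  fixes A F :: "nat \<Rightarrow> nat \<Rightarrow> real"
  assumes "\<forall>k<r. (\<Sum>b<n. A a b * F b k) = F a k"
  shows "(\<Sum>b<n. A a b * (\<Sum>k<r. F b k * B k c)) = (\<Sum>k<r. F a k * B k c)"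
proof -
  have "(\<Sum>b<n. A a b * (\<Sum>k<r. F b k * B k c)) = (\<Sum>k<r. (\<Sum>b<n. A a b * F b k) * B k c)"
    by (simp add: sum_distrib_left sum_distrib_right mult_ac sum.swap[of _ "{..<n}"])
  then show ?thesis
    using assms by simp
qed

definition orth_proj :: "nat \<Rightarrow> (nat \<Rightarrow> nat \<Rightarrow> real) \<Rightarrow> nat \<Rightarrow> nat \<Rightarrow> real" where
  "orth_proj r F = (\<lambda>a b. \<Sum>k<r. F a k * F b k)"

lemma orth_proj_mult_col:
  assumes "orthonormal_cols n q F" and "r \<le> q" and "t < q"
  shows "(\<Sum>b<n. orth_proj r F a b * F b t) = (if t < r then F a t else 0)"
proof -
  have "(\<Sum>b<n. orth_proj r F a b * F b t) = (\<Sum>k<r. F a k * (\<Sum>b<n. F b k * F b t))"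
    unfolding orth_proj_def by (rule sum_mult_assoc)
  also have "\<dots> = (\<Sum>k<r. if k = t then F a t else 0)"
    using assms by (intro sum.cong refl) (simp add: orthonormal_cols_def)
  finally show ?thesis
    by simp
qed

lemma orth_proj_fixes_cols:
  "orthonormal_cols n r F \<Longrightarrow> k < r \<Longrightarrow> (\<Sum>b<n. orth_proj r F a b * F b k) = F a k"
  using orth_proj_mult_col[of n r F r k] by simp

lemma is_orth_proj_mat_orth_proj:
  assumes "orthonormal_cols n r F"
  shows "is_orth_proj_mat n (orth_proj r F)"
  unfolding is_orth_proj_mat_def
proof (intro conjI allI impI)
  show "orth_proj r F a b = orth_proj r F b a" for a b
    by (simp add: orth_proj_def mult.commute)
  show "(\<Sum>b<n. orth_proj r F a b * orth_proj r F b c) = orth_proj r F a c" for a c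
  proof -
    have "(\<Sum>b<n. orth_proj r F a b * (\<Sum>k<r. F b k * F c k)) = (\<Sum>k<r. F a k * F c k)"
      by (rule left_mult_fixes_span) (simp add: orth_proj_fixes_cols[OF assms])
    then show ?thesis
      by (simp add: orth_proj_def)
  qed
qed

lemma oblique_proj_eq_span:
  "oblique_proj r F Minv S a c = (\<Sum>k<r. F a k * (\<Sum>l<r. Minv k l * S c l))"
  by (simp add: oblique_proj_def sum_distrib_left mult_ac)

context
  fixes n r :: nat and F S Minv :: "nat \<Rightarrow> nat \<Rightarrow> real"
  assumes left_inverse: "\<forall>k<r. \<forall>l<r. (\<Sum>m<r. Minv k m * (\<Sum>i<n. S i m * F i l)) = (if k = l then 1 else 0)"
begin

lemma oblique_proj_fixes_cols:
  assumes "k < r"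
  shows "(\<Sum>b<n. oblique_proj r F Minv S a b * F b k) = F a k"
proof -
  have "(\<Sum>b<n. oblique_proj r F Minv S a b * F b k)
      = (\<Sum>k'<r. F a k' * (\<Sum>m<r. Minv k' m * (\<Sum>i<n. S i m * F i k)))"
    unfolding oblique_proj_eq_span sum_mult_assoc ..
  also have "\<dots> = (\<Sum>k'<r. if k' = k then F a k else 0)"
    using left_inverse assms by (intro sum.cong refl) simp
  finally show ?thesis
    using assms by simp
qed

lemma oblique_proj_idem:
  "(\<Sum>b<n. oblique_proj r F Minv S a b * oblique_proj r F Minv S b c) = oblique_proj r F Minv S a c"
  unfolding oblique_proj_eq_span[of r F Minv S _ c]
  by (rule left_mult_fixes_span) (simp add: oblique_proj_fixes_cols)

lemma oblique_proj_mult_orth_proj: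
  "(\<Sum>b<n. oblique_proj r F Minv S a b * orth_proj r F b c) = orth_proj r F a c"
  unfolding orth_proj_def by (rule left_mult_fixes_span) (simp add: oblique_proj_fixes_cols)

end

lemma orth_proj_mult_oblique_proj:
  assumes "orthonormal_cols n r F"
  shows "(\<Sum>b<n. orth_proj r F a b * oblique_proj r F Minv S b c) = oblique_proj r F Minv S a c"
  unfolding oblique_proj_eq_span[of r F Minv S _ c]
  by (rule left_mult_fixes_span) (simp add: orth_proj_fixes_cols[OF assms])

definition column_selection :: "nat \<Rightarrow> nat \<Rightarrow> (nat \<Rightarrow> nat \<Rightarrow> real) \<Rightarrow> (nat \<Rightarrow> nat) \<Rightarrow> bool" where
  "column_selection n r S p \<longleftrightarrow> inj_on p {..<r} \<and> p ` {..<r} \<subseteq> {..<n} \<and>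
     (\<forall>i<n. \<forall>k<r. S i k = (if i = p k then 1 else 0))"

lemma column_selection_of_perm:
  assumes "bij_betw p {..<n} {..<n}" and "r \<le> n"
    and "\<forall>i<n. \<forall>k<r. S i k = (if i = p k then 1 else 0)"
  shows "column_selection n r S p"
proof -
  have "inj_on p {..<r}" "p ` {..<r} \<subseteq> {..<n}"
    using assms(1,2) by (auto simp: bij_betw_def intro: inj_on_subset)
  then show ?thesis
    using assms(3) by (simp add: column_selection_def)
qed

context
  fixes n r :: nat and S :: "nat \<Rightarrow> nat \<Rightarrow> real" and p :: "nat \<Rightarrow> nat"
  assumes selection: "column_selection n r S p"
begin

lemma column_selection_sum:
  assumes "l < r"
  shows "(\<Sum>i<n. S i l * f i) = f (p l)"
proof -
  have "(\<Sum>i<n. S i l * f i) = (\<Sum>i<n. if i = p l then f i else 0)"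
    using selection assms by (intro sum.cong) (auto simp: column_selection_def)
  also have "\<dots> = f (p l)"
    using selection assms by (auto simp: column_selection_def)
  finally show ?thesis .
qed

lemma column_selection_sum_sq_le:
  fixes x :: "nat \<Rightarrow> real"
  shows "(\<Sum>l<r. (x (p l))\<^sup>2) \<le> (\<Sum>b<n. (x b)\<^sup>2)"
proof -
  have "(\<Sum>l<r. (x (p l))\<^sup>2) = (\<Sum>b\<in>p ` {..<r}. (x b)\<^sup>2)"
    using selection by (simp add: column_selection_def sum.reindex)
  also have "\<dots> \<le> (\<Sum>b<n. (x b)\<^sup>2)"
    by (rule sum_mono2) (use selection in \<open>auto simp: column_selection_def\<close>)
  finally show ?thesis .
qed

lemma oblique_proj_apply:
  "(\<Sum>b<n. oblique_proj r F Minv S a b * x b) = (\<Sum>k<r. F a k * (\<Sum>l<r. Minv k l * x (p l)))"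
  unfolding oblique_proj_eq_span sum_mult_assoc by (simp add: column_selection_sum)

lemma oblique_proj_norm_le:
  assumes "orthonormal_cols n r F"
  shows "(\<Sum>a<n. (\<Sum>b<n. oblique_proj r F Minv S a b * x b)\<^sup>2)
       \<le> (spec_norm r r Minv)\<^sup>2 * (\<Sum>b<n. (x b)\<^sup>2)"
proof -
  have "(\<Sum>a<n. (\<Sum>b<n. oblique_proj r F Minv S a b * x b)\<^sup>2) = (\<Sum>k<r. (\<Sum>l<r. Minv k l * x (p l))\<^sup>2)"
    by (simp add: oblique_proj_apply orthonormal_cols_sum_sq[OF assms])
  also have "\<dots> \<le> (spec_norm r r Minv)\<^sup>2 * (\<Sum>l<r. (x (p l))\<^sup>2)"
    by (rule sum_sq_matrix_mult_le_spec_norm)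
  also have "\<dots> \<le> (spec_norm r r Minv)\<^sup>2 * (\<Sum>b<n. (x b)\<^sup>2)"
    by (intro mult_left_mono column_selection_sum_sq_le) simp
  finally show ?thesis .
qed

text \<open>Minv maps the selected rows of the first column of F to the first unit vector, and
  those rows have norm at most one.\<close>

lemma spec_norm_left_inverse_ge_one:
  assumes "0 < r" and "orthonormal_cols n r F"
    and left_inverse: "\<forall>k<r. \<forall>l<r. (\<Sum>m<r. Minv k m * (\<Sum>i<n. S i m * F i l)) = (if k = l then 1 else 0)"
  shows "1 \<le> spec_norm r r Minv"
proof -
  have "(\<Sum>k<r. (\<Sum>l<r. Minv k l * F (p l) 0)\<^sup>2) = (\<Sum>k<r. (if k = 0 then 1 else 0))"
    using left_inverse assms(1) by (intro sum.cong refl) (simp add: column_selection_sum)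
  then have "1 \<le> (spec_norm r r Minv)\<^sup>2 * (\<Sum>l<r. (F (p l) 0)\<^sup>2)"
    using assms(1) sum_sq_matrix_mult_le_spec_norm[where m=r and n=r and A=Minv and x="\<lambda>l. F (p l) 0"] by simp
  also have "\<dots> \<le> (spec_norm r r Minv)\<^sup>2 * (\<Sum>b<n. (F b 0)\<^sup>2)"
    by (intro mult_left_mono column_selection_sum_sq_le) simp
  also have "(\<Sum>b<n. (F b 0)\<^sup>2) = 1"
    using assms(1,2) by (simp add: orthonormal_cols_def power2_eq_square)
  finally have "1 \<le> (spec_norm r r Minv)\<^sup>2"
    by simp
  then show ?thesis
    using power2_le_imp_le[of 1 "spec_norm r r Minv"] spec_norm_nonneg[of r r Minv] by simp
qed

end

section \<open>Truncated SVD and the main estimate\<close>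

lemma orth_proj_residual_expansion:
  assumes U: "orthonormal_cols n n U" and "r \<le> n"
    and A: "\<forall>i<n. \<forall>j\<in>J. A i j = (\<Sum>t<n. U i t * s t * V t j)"
    and "i < n" "j \<in> J"
  shows "A i j - (\<Sum>c<n. orth_proj r U i c * A c j) = (\<Sum>t\<in>{r..<n}. U i t * (s t * V t j))"
proof -
  have "(\<Sum>c<n. orth_proj r U i c * A c j) = (\<Sum>t<n. (\<Sum>c<n. orth_proj r U i c * U c t) * (s t * V t j))"
    using A \<open>j \<in> J\<close> by (simp add: sum_mult_assoc[symmetric] mult.assoc)
  also have "\<dots> = (\<Sum>t<n. if t < r then U i t * (s t * V t j) else 0)"
    using \<open>r \<le> n\<close> by (intro sum.cong refl) (simp add: orth_proj_mult_col[OF U])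
  also have "\<dots> = (\<Sum>t<r. U i t * (s t * V t j))"
  proof -
    have "{t \<in> {..<n}. t < r} = {..<r}"
      using \<open>r \<le> n\<close> by auto
    then show ?thesis
      by (simp add: sum.inter_filter[symmetric])
  qed
  finally have "(\<Sum>c<n. orth_proj r U i c * A c j) = (\<Sum>t<r. U i t * (s t * V t j))" .
  moreover have "(\<Sum>t<n. U i t * (s t * V t j))
      = (\<Sum>t<r. U i t * (s t * V t j)) + (\<Sum>t\<in>{r..<n}. U i t * (s t * V t j))"
    using \<open>r \<le> n\<close> sum.atLeastLessThan_concat[of 0 r n "\<lambda>t. U i t * (s t * V t j)"]
    by (simp add: atLeast0LessThan)
  ultimately show ?thesis
    using A assms(4,5) by (simp add: mult.assoc)
qed

lemma svd_truncation_residual: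
  assumes svd: "is_svd n J A U s" and "r \<le> n"
  shows "(\<Sum>i<n. \<Sum>j\<in>J. (A i j - (\<Sum>c<n. orth_proj r U i c * A c j))\<^sup>2) = (\<Sum>t\<in>{r..<n}. (s t)\<^sup>2)"
proof -
  have U: "orthonormal_cols n n U"
    using svd by (simp add: is_svd_def orthonormal_cols_def)
  obtain V where
    V: "\<forall>k<n. \<forall>l<n. 0 < s k \<longrightarrow> 0 < s l \<longrightarrow>
          (\<Sum>j\<in>J. V k j * V l j) = (if k = l then 1 else 0)"
    and A: "\<forall>i<n. \<forall>j\<in>J. A i j = (\<Sum>t<n. U i t * s t * V t j)"
    and s_nonneg: "\<forall>k<n. 0 \<le> s k"
    using svd unfolding is_svd_def by blast
  have "(\<Sum>i<n. \<Sum>j\<in>J. (A i j - (\<Sum>c<n. orth_proj r U i c * A c j))\<^sup>2)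
      = (\<Sum>i<n. \<Sum>j\<in>J. (\<Sum>t\<in>{r..<n}. U i t * (s t * V t j))\<^sup>2)"
    using orth_proj_residual_expansion[OF U \<open>r \<le> n\<close> A] by (intro sum.cong refl) simp
  also have "\<dots> = (\<Sum>j\<in>J. \<Sum>i<n. (\<Sum>t\<in>{r..<n}. U i t * (s t * V t j))\<^sup>2)"
    by (rule sum.swap)
  also have "\<dots> = (\<Sum>j\<in>J. \<Sum>t\<in>{r..<n}. (s t * V t j)\<^sup>2)"
    by (intro sum.cong refl orthonormal_cols_sum_sq[OF U]) auto
  also have "\<dots> = (\<Sum>t\<in>{r..<n}. \<Sum>j\<in>J. (s t * V t j)\<^sup>2)"
    by (rule sum.swap)
  also have "\<dots> = (\<Sum>t\<in>{r..<n}. (s t)\<^sup>2 * (\<Sum>j\<in>J. V t j * V t j))"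
    by (simp add: sum_distrib_left power2_eq_square mult_ac)
  also have "\<dots> = (\<Sum>t\<in>{r..<n}. (s t)\<^sup>2)"
    using V s_nonneg by (intro sum.cong refl) (auto simp: order_le_less)
  finally show ?thesis .
qed

lemma orthonormal_cols_svd_left:
  assumes "is_svd n J A U s" and "r \<le> n" and "\<forall>i<n. \<forall>k<r. F i k = U i k"
  shows "orthonormal_cols n r F"
  using assms by (auto simp: is_svd_def orthonormal_cols_def)

lemma tensor_inner_mode_residual_unfold:
  assumes "n < m"
  shows "tensor_inner N m (\<lambda>i. G i - mode_prod N n P G i) (\<lambda>i. G i - mode_prod N n P G i)
       = (\<Sum>a<N n. \<Sum>j\<in>unfold_cols N m n.
            (mode_unfold G n a j - (\<Sum>c<N n. P a c * mode_unfold G n c j))\<^sup>2)"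
  by (simp add: tensor_inner_def sum_tidx_unfold[OF assms] mode_prod_def mode_unfold_def
      power2_eq_square mult.commute)

lemma mode_residual_svd:
  assumes "n < m" and svd: "is_svd (N n) (unfold_cols N m n) (mode_unfold G n) U s"
    and "r \<le> N n" and F: "\<forall>i<N n. \<forall>k<r. F i k = U i k"
  shows "tensor_inner N m (\<lambda>i. G i - mode_prod N n (orth_proj r F) G i)
           (\<lambda>i. G i - mode_prod N n (orth_proj r F) G i) = (\<Sum>t\<in>{r..<N n}. (s t)\<^sup>2)"
proof -
  have "\<forall>a<N n. \<forall>c<N n. orth_proj r F a c = orth_proj r U a c"
    using F by (simp add: orth_proj_def)
  then show ?thesis
    unfolding tensor_inner_mode_residual_unfold[OF assms(1)]
    by (simp add: svd_truncation_residual[OF svd \<open>r \<le> N n\<close>, symmetric])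
qed

lemma multi_orth_proj_svd_residual_le:
  assumes "d \<le> m"
    and svd: "\<forall>n<d. is_svd (N n) (unfold_cols N m n) (mode_unfold G n) (U n) (s n)"
    and ranks: "\<forall>n<d. r n \<le> N n" and F: "\<forall>n<d. \<forall>i<N n. \<forall>k<r n. F n i k = U n i k"
  defines "Orth \<equiv> \<lambda>n. orth_proj (r n) (F n)"
  shows "tensor_inner N m (\<lambda>i. G i - multi_mode_prod N Orth d G i) (\<lambda>i. G i - multi_mode_prod N Orth d G i)
       \<le> (\<Sum>n<d. \<Sum>k\<in>{r n..<N n}. (s n k)\<^sup>2)"
proof -
  have "\<forall>n<d. is_orth_proj_mat (N n) (Orth n)"
    unfolding Orth_def using svd ranks F by (blast intro: is_orth_proj_mat_orth_proj orthonormal_cols_svd_left)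
  then have "tensor_inner N m (\<lambda>i. G i - multi_mode_prod N Orth d G i) (\<lambda>i. G i - multi_mode_prod N Orth d G i)
      \<le> (\<Sum>n<d. tensor_inner N m (\<lambda>i. G i - mode_prod N n (Orth n) G i)
                                  (\<lambda>i. G i - mode_prod N n (Orth n) G i))"
    by (rule multi_orth_proj_residual_le_sum[OF \<open>d \<le> m\<close>])
  also have "\<dots> = (\<Sum>n<d. \<Sum>k\<in>{r n..<N n}. (s n k)\<^sup>2)"
    using \<open>d \<le> m\<close> svd ranks F unfolding Orth_def
    by (intro sum.cong refl) (auto intro!: mode_residual_svd)
  finally show ?thesis .
qed

lemma multi_oblique_proj_norm_le:
  fixes Minv :: "nat \<Rightarrow> nat \<Rightarrow> nat \<Rightarrow> real"
  assumes "d \<le> m"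
    and orthonormal: "\<forall>n<d. orthonormal_cols (N n) (r n) (F n)"
    and selection: "\<forall>n<d. column_selection (N n) (r n) (S n) (p n)"
  defines "Obl \<equiv> \<lambda>n. oblique_proj (r n) (F n) (Minv n) (S n)"
  shows "tensor_inner N m (multi_mode_prod N Obl d X) (multi_mode_prod N Obl d X)
       \<le> (\<Prod>n<d. spec_norm (r n) (r n) (Minv n))\<^sup>2 * tensor_inner N m X X"
proof -
  have "tensor_inner N m (multi_mode_prod N Obl d X) (multi_mode_prod N Obl d X)
      \<le> (\<Prod>n<d. (spec_norm (r n) (r n) (Minv n))\<^sup>2) * tensor_inner N m X X"
  proof (rule multi_mode_prod_norm_le[OF \<open>d \<le> m\<close>])
    fix n x assume "n < d"
    then show "(\<Sum>a<N n. (\<Sum>k<N n. Obl n a k * x k)\<^sup>2)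
        \<le> (spec_norm (r n) (r n) (Minv n))\<^sup>2 * (\<Sum>k<N n. (x k)\<^sup>2)"
      unfolding Obl_def using orthonormal selection
      by (intro oblique_proj_norm_le[where n="N n" and p="p n"]) auto
  qed simp
  then show ?thesis
    by (simp add: prod_power_distrib)
qed

lemma multi_oblique_proj_residual_le:
  assumes "d \<le> m"
    and r_pos: "\<forall>n<d. 0 < r n"
    and orthonormal: "\<forall>n<d. orthonormal_cols (N n) (r n) (F n)"
    and selection: "\<forall>n<d. column_selection (N n) (r n) (S n) (p n)"
    and left_inverse: "\<forall>n<d. \<forall>k<r n. \<forall>l<r n.
          (\<Sum>m<r n. Minv n k m * (\<Sum>i<N n. S n i m * F n i l)) = (if k = l then 1 else 0)"
  defines "Obl \<equiv> \<lambda>n. oblique_proj (r n) (F n) (Minv n) (S n)"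
    and "Orth \<equiv> \<lambda>n. orth_proj (r n) (F n)"
  shows "tensor_inner N m (\<lambda>i. G i - multi_mode_prod N Obl d G i) (\<lambda>i. G i - multi_mode_prod N Obl d G i)
       \<le> (\<Prod>n<d. spec_norm (r n) (r n) (Minv n))\<^sup>2
         * tensor_inner N m (\<lambda>i. G i - multi_mode_prod N Orth d G i) (\<lambda>i. G i - multi_mode_prod N Orth d G i)"
proof -
  let ?L = "multi_mode_prod N Obl d" and ?Q = "multi_mode_prod N Orth d"
  let ?K = "(\<Prod>n<d. spec_norm (r n) (r n) (Minv n))\<^sup>2"
  define Y where "Y = (\<lambda>i. G i - ?Q G i)"
  have Orth_proj: "\<forall>n<d. is_orth_proj_mat (N n) (Orth n)"
    using orthonormal by (simp add: Orth_def is_orth_proj_mat_orth_proj)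
  have L_fixes_Q: "\<forall>i\<in>tidx N m. ?L (?Q X) i = ?Q X i" for X
    using left_inverse
    by (intro multi_mode_prod_multi_mode_prod_on_tidx[OF \<open>d \<le> m\<close>])
       (simp add: Obl_def Orth_def oblique_proj_mult_orth_proj)
  have Q_fixes_L: "\<forall>i\<in>tidx N m. ?Q (?L X) i = ?L X i" for X
    using orthonormal
    by (intro multi_mode_prod_multi_mode_prod_on_tidx[OF \<open>d \<le> m\<close>])
       (simp add: Obl_def Orth_def orth_proj_mult_oblique_proj)
  have "\<forall>i\<in>tidx N m. G i - ?L G i = Y i - ?L Y i"
    using L_fixes_Q[of G] by (simp add: Y_def multi_mode_prod_linear[where a=1 and b="-1", simplified])
  then have "tensor_inner N m (\<lambda>i. G i - ?L G i) (\<lambda>i. G i - ?L G i)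
      = tensor_inner N m (\<lambda>i. Y i - ?L Y i) (\<lambda>i. Y i - ?L Y i)"
    by (intro tensor_inner_cong)
  also have "\<dots> \<le> ?K * tensor_inner N m Y Y"
  proof (rule multi_mode_prod_idem_residual_le[OF \<open>d \<le> m\<close>])
    show "\<forall>n<d. \<forall>a<N n. \<forall>c<N n. (\<Sum>b<N n. Obl n a b * Obl n b c) = Obl n a c"
      using left_inverse by (simp add: Obl_def oblique_proj_idem)
    show "tensor_inner N m (?L X) (?L X) \<le> ?K * tensor_inner N m X X" for X
      unfolding Obl_def by (rule multi_oblique_proj_norm_le[OF \<open>d \<le> m\<close> orthonormal selection])
    have "1 \<le> spec_norm (r n) (r n) (Minv n)" if "n < d" for n
      using r_pos orthonormal selection left_inverse that
      by (intro spec_norm_left_inverse_ge_one[where n="N n" and p="p n"]) auto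
    then show "1 \<le> ?K"
      by (intro one_le_power prod_ge_1) auto
    have "tensor_inner N m Y (?L Y) = tensor_inner N m Y (?Q (?L Y))"
      using Q_fixes_L by (intro tensor_inner_cong) simp_all
    then show "tensor_inner N m Y (?L Y) = 0"
      using multi_orth_proj_residual_orth[OF \<open>d \<le> m\<close> Orth_proj] by (simp add: Y_def)
  qed
  finally show ?thesis
    by (simp add: Y_def)
qed

theorem theorem1:
  fixes d T :: nat
    and N :: "nat \<Rightarrow> nat"
    and G :: "(nat \<Rightarrow> nat) \<Rightarrow> real"
    and r :: "nat \<Rightarrow> nat"
    and U Phi S Minv :: "nat \<Rightarrow> nat \<Rightarrow> nat \<Rightarrow> real"
    and s :: "nat \<Rightarrow> nat \<Rightarrow> real"
    and p :: "nat \<Rightarrow> nat \<Rightarrow> nat"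
  assumes d_pos: "1 \<le> d"
    and T_dim: "N d = T"
    and ranks: "\<forall>n<d. 1 \<le> r n \<and> r n < N n"
    and svd: "\<forall>n<d. is_svd (N n) (unfold_cols N (Suc d) n) (mode_unfold G n) (U n) (s n)"
    and Phi_def: "\<forall>n<d. \<forall>i<N n. \<forall>k<r n. Phi n i k = U n i k"
    and perm: "\<forall>n<d. bij_betw (p n) {..<N n} {..<N n}"
    and pivQR: "\<forall>n<d. \<exists>Q R :: nat \<Rightarrow> nat \<Rightarrow> real.
                 (\<forall>k<r n. \<forall>l<r n. (\<Sum>m<r n. Q m k * Q m l) = (if k = l then 1 else 0)) \<and>
                 (\<forall>k<r n. \<forall>j<N n. j < k \<longrightarrow> R k j = 0) \<and>
                 (\<forall>k<r n. \<forall>j<N n.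
                    (\<Sum>i<N n. Phi n i k * (if i = p n j then 1 else 0)) = (\<Sum>l<r n. Q k l * R l j))"
    and S_def: "\<forall>n<d. \<forall>i<N n. \<forall>k<r n. S n i k = (if i = p n k then 1 else 0)"
    and Minv_left: "\<forall>n<d. \<forall>k<r n. \<forall>l<r n.
                 (\<Sum>m<r n. Minv n k m * (\<Sum>i<N n. S n i m * Phi n i l)) = (if k = l then 1 else 0)"
    and Minv_right: "\<forall>n<d. \<forall>k<r n. \<forall>l<r n.
                 (\<Sum>m<r n. (\<Sum>i<N n. S n i k * Phi n i m) * Minv n m l) = (if k = l then 1 else 0)"
  shows "frob N (Suc d)
           (\<lambda>i. G i - multi_mode_prod N (\<lambda>n. oblique_proj (r n) (Phi n) (Minv n) (S n)) d G i)
         \<le> (\<Prod>n<d. spec_norm (r n) (r n) (Minv n))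
           * sqrt (\<Sum>n<d. \<Sum>k\<in>{r n..<N n}. (s n k)\<^sup>2)"
proof -
  let ?Obl = "\<lambda>n. oblique_proj (r n) (Phi n) (Minv n) (S n)"
  let ?Orth = "\<lambda>n. orth_proj (r n) (Phi n)"
  let ?C = "\<Prod>n<d. spec_norm (r n) (r n) (Minv n)"
  let ?tails = "\<Sum>n<d. \<Sum>k\<in>{r n..<N n}. (s n k)\<^sup>2"
  have orthonormal: "\<forall>n<d. orthonormal_cols (N n) (r n) (Phi n)"
    using svd ranks Phi_def by (blast intro: orthonormal_cols_svd_left less_imp_le)
  have selection: "\<forall>n<d. column_selection (N n) (r n) (S n) (p n)"
    using perm ranks S_def by (simp add: column_selection_of_perm less_imp_le)
  have "tensor_inner N (Suc d) (\<lambda>i. G i - multi_mode_prod N ?Obl d G i) (\<lambda>i. G i - multi_mode_prod N ?Obl d G i)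
      \<le> ?C\<^sup>2 * tensor_inner N (Suc d) (\<lambda>i. G i - multi_mode_prod N ?Orth d G i)
          (\<lambda>i. G i - multi_mode_prod N ?Orth d G i)"
    by (rule multi_oblique_proj_residual_le) (use ranks orthonormal selection Minv_left in auto)
  also have "\<dots> \<le> ?C\<^sup>2 * ?tails"
    using svd ranks Phi_def by (intro mult_left_mono multi_orth_proj_svd_residual_le) auto
  finally have "sqrt (tensor_inner N (Suc d) (\<lambda>i. G i - multi_mode_prod N ?Obl d G i)
      (\<lambda>i. G i - multi_mode_prod N ?Obl d G i)) \<le> sqrt (?C\<^sup>2 * ?tails)"
    by (rule real_sqrt_le_mono)
  also have "\<dots> = ?C * sqrt ?tails"
    by (simp add: real_sqrt_mult prod_nonneg spec_norm_nonneg)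
  finally show ?thesis
    by (simp add: frob_eq_sqrt_tensor_inner)
qed

end
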